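(* Let $p$ be a prime, $q=p^r$, $\mathscr{C}\subseteq\mathbb{F}_q^n$ a linear code over $\mathbb{F}_q$ of dimension $k$ ($1\le k<n$), $m\ge2$, $\mathscr{D}=\{(\lambda,\ldots,\lambda):\lambda\in\mathbb{F}_{q^k}\}\subset\mathbb{F}_{q^k}^m$, $\kappa:\mathbb{F}_{q^k}\to\mathcal{L}(\mathscr{C},\mathbb{F}_p)$ an $\mathbb{F}_p$-linear isomorphism, $f_\lambda=\kappa(\lambda)$, and $Q=\operatorname{span}\{\Phi_\Lambda:\Lambda\in\mathscr{D}\}$. Then $$Q=\operatorname{span}\Big\{\sum_{\substack{(\mathbf{c}_1,\ldots,\mathbf{c}_m)\in\mathscr{C}^m\\ \mathbf{c}_1+\cdots+\mathbf{c}_m=\mathbf{c}}}|\mathbf{c}_1\ldots\mathbf{c}_m\rangle:\mathbf{c}\in\mathscr{C}\Big\}.$$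
   Context: $\zeta=e^{2\pi i/p}$; $\mathcal{L}(\mathscr{C},\mathbb{F}_p)$ is the space of $\mathbb{F}_p$-linear maps $\mathscr{C}\to\mathbb{F}_p$, with $\mathbb{F}_{q^k}$ viewed as an $\mathbb{F}_p$-space. $\phi_\lambda=q^{-k/2}\sum_{\mathbf{c}\in\mathscr{C}}\zeta^{f_\lambda(\mathbf{c})}|\mathbf{c}\rangle\in(\mathbb{C}^q)^{\otimes n}$, $\Phi_\Lambda=\phi_{\lambda_1}\otimes\cdots\otimes\phi_{\lambda_m}$; $(\mathbb{C}^q)^{\otimes nm}$ has orthonormal basis $|\mathbf{c}_1\ldots\mathbf{c}_m\rangle=|\mathbf{c}_1\rangle\otimes\cdots\otimes|\mathbf{c}_m\rangle$. *)

theory Defs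
  imports Complex_Main "HOL-Library.Function_Algebras" "HOL-Computational_Algebra.Primes"
begin

text \<open>Vectors of the Hilbert space with orthonormal basis indexed by a type x
  are modelled as functions x => complex; ket x is the basis vector.\<close>

definition ket :: "'x \<Rightarrow> 'x \<Rightarrow> complex" where
  "ket x = (\<lambda>y. if y = x then 1 else 0)"

definition cscale :: "complex \<Rightarrow> ('x \<Rightarrow> complex) \<Rightarrow> 'x \<Rightarrow> complex" where
  "cscale a v = (\<lambda>y. a * v y)"

definition cspan :: "('x \<Rightarrow> complex) set \<Rightarrow> ('x \<Rightarrow> complex) set" where
  "cspan S = module.span cscale S"

definition vscale :: "'a::times \<Rightarrow> ('n \<Rightarrow> 'a) \<Rightarrow> 'n \<Rightarrow> 'a" where
  "vscale a v = (\<lambda>i. a * v i)"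

definition linear_code :: "('n::finite \<Rightarrow> 'a::field) set \<Rightarrow> nat \<Rightarrow> bool" where
  "linear_code C k \<longleftrightarrow> module.subspace vscale C \<and> vector_space.dim vscale C = k"

text \<open>F_p is represented by residues {0..<p}; the F_p-linear maps C -> F_p
  (extended by 0 outside C).\<close>
definition Fp_dual :: "nat \<Rightarrow> ('n \<Rightarrow> 'a::field) set \<Rightarrow> (('n \<Rightarrow> 'a) \<Rightarrow> nat) set" where
  "Fp_dual p C = {f. (\<forall>c\<in>C. f c < p)
     \<and> (\<forall>c\<in>C. \<forall>d\<in>C. f (c + d) = (f c + f d) mod p)
     \<and> (\<forall>c\<in>C. \<forall>j<p. f (vscale (of_nat j) c) = (j * f c) mod p)
     \<and> (\<forall>c. c \<notin> C \<longrightarrow> f c = 0)}"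

definition Fp_linear_iso :: "nat \<Rightarrow> ('n \<Rightarrow> 'a::field) set \<Rightarrow> ('b::field \<Rightarrow> ('n \<Rightarrow> 'a) \<Rightarrow> nat) \<Rightarrow> bool" where
  "Fp_linear_iso p C \<kappa> \<longleftrightarrow>
     (\<forall>x y. \<kappa> (x + y) = (\<lambda>c. (\<kappa> x c + \<kappa> y c) mod p))
   \<and> (\<forall>x. \<forall>j<p. \<kappa> (of_nat j * x) = (\<lambda>c. (j * \<kappa> x c) mod p))
   \<and> bij_betw \<kappa> UNIV (Fp_dual p C)"

definition zeta :: "nat \<Rightarrow> complex" where
  "zeta p = cis (2 * pi / real p)"

definition phi :: "nat \<Rightarrow> nat \<Rightarrow> nat \<Rightarrow> 'v set \<Rightarrow> ('v \<Rightarrow> nat) \<Rightarrow> 'v \<Rightarrow> complex" where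
  "phi p q k C f = (\<lambda>y. complex_of_real (real q powr (- (real k / 2)))
                        * (\<Sum>c\<in>C. zeta p ^ f c * ket c y))"

text \<open>Tensor product of a list of vectors; basis |c_1...c_m> = ket [c_1,...,c_m].\<close>
definition tensor :: "('v \<Rightarrow> complex) list \<Rightarrow> 'v list \<Rightarrow> complex" where
  "tensor vs = (\<lambda>cs. if length cs = length vs
                      then (\<Prod>i<length vs. (vs ! i) (cs ! i)) else 0)"

definition Phi :: "nat \<Rightarrow> nat \<Rightarrow> nat \<Rightarrow> 'v set \<Rightarrow> ('b \<Rightarrow> 'v \<Rightarrow> nat) \<Rightarrow> 'b list \<Rightarrow> 'v list \<Rightarrow> complex" where
  "Phi p q k C \<kappa> \<Lambda> = tensor (map (\<lambda>l. phi p q k C (\<kappa> l)) \<Lambda>)"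

definition diag :: "nat \<Rightarrow> 'b list set" where
  "diag m = {replicate m l | l. True}"

end

theory Submission
  imports Defs "HOL-Library.FuncSet"
begin

text \<open>Put \<open>\<chi>\<^sub>\<lambda>(c) = \<zeta>^f\<^sub>\<lambda>(c)\<close>. Each \<open>\<chi>\<^sub>\<lambda>\<close> is a character of the additive group C, and
  \<open>\<Phi>(\<lambda>,...,\<lambda>) = q^(-km/2) \<Sum>\<^sub>c\<^sub>\<in>\<^sub>C \<chi>\<^sub>\<lambda>(c) v\<^sub>c\<close>, where \<open>v\<^sub>c = split_state C m c\<close> is the sum
  of \<open>|c\<^sub>1...c\<^sub>m>\<close> over all ways of writing c as a sum of m codewords; this gives one
  inclusion. For the other, the characters are orthogonal: \<open>\<Sum>\<^sub>\<lambda> \<chi>\<^sub>\<lambda>(c) = q^k [c = 0]\<close>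
  for \<open>c \<in> C\<close>. A nontrivial character sums to zero, and the codewords on which every
  \<open>f\<^sub>\<lambda>\<close> vanishes form a set K with \<open>|K| q^k = |C| = q^k\<close>, by double counting
  \<open>\<Sum>\<^sub>c \<Sum>\<^sub>\<lambda> \<chi>\<^sub>\<lambda>(c)\<close> and injectivity of \<open>\<kappa>\<close>. Inverting the character matrix then
  expresses each \<open>v\<^sub>c\<close> through the \<open>\<Phi>(\<lambda>,...,\<lambda>)\<close>.\<close>

lemma vector_space_vscale: "vector_space (vscale :: 'a::field \<Rightarrow> ('n \<Rightarrow> 'a) \<Rightarrow> _)"
  by unfold_locales (auto simp: vscale_def fun_eq_iff algebra_simps)

lemma module_cscale: "module (cscale :: complex \<Rightarrow> ('x \<Rightarrow> complex) \<Rightarrow> _)"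
  by unfold_locales (auto simp: cscale_def fun_eq_iff algebra_simps)

lemma sum_fun_apply: "(\<Sum>a\<in>A. f a) x = (\<Sum>a\<in>A. f a x)"
  by (induct A rule: infinite_finite_induct) auto

lemma (in vector_space) card_subspace_eq_power_dim:
  assumes "finite (UNIV :: 'a set)" and "subspace S" and "finite S"
  shows "card S = card (UNIV :: 'a set) ^ dim S"
proof -
  obtain B where B: "B \<subseteq> S" "independent B" "S \<subseteq> span B" "card B = dim S"
    by (rule basis_exists)
  have "finite B" using B(1) assms(3) by (rule finite_subset)
  have span_B: "span B = S" using span_subspace[OF B(1,3) assms(2)] .
  define comb where "comb u = (\<Sum>v\<in>B. u v *s v)" for u
  have "inj_on comb (B \<rightarrow>\<^sub>E UNIV)"
  proof (rule inj_onI)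
    fix u u' assume u: "u \<in> B \<rightarrow>\<^sub>E UNIV" and u': "u' \<in> B \<rightarrow>\<^sub>E UNIV" and "comb u = comb u'"
    then have "(\<Sum>v\<in>B. (u v - u' v) *s v) = 0"
      by (simp add: comb_def scale_left_diff_distrib sum_subtractf)
    then have "\<forall>v\<in>B. u v - u' v = 0"
      using B(2) \<open>finite B\<close> unfolding independent_explicit_finite_subsets by (meson order_refl)
    then show "u = u'" using PiE_ext[OF u u'] by simp
  qed
  moreover have "comb ` (B \<rightarrow>\<^sub>E UNIV) = S"
  proof -
    have "comb u = comb (restrict u B)" for u
      unfolding comb_def by (rule sum.cong) simp_all
    then have "range comb \<subseteq> comb ` (B \<rightarrow>\<^sub>E UNIV)"
      by (metis image_eqI image_subsetI restrict_PiE_iff UNIV_I)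
    then have "comb ` (B \<rightarrow>\<^sub>E UNIV) = range comb" by blast
    also have "\<dots> = S" using span_finite[OF \<open>finite B\<close>] span_B by (simp add: comb_def)
    finally show ?thesis .
  qed
  ultimately have "card S = card (B \<rightarrow>\<^sub>E (UNIV :: 'a set))" by (metis card_image)
  then show ?thesis using B(4) \<open>finite B\<close> by (simp add: card_PiE)
qed

lemma card_linear_code:
  fixes C :: "('n::finite \<Rightarrow> 'a::{field,finite}) set"
  assumes "linear_code C k"
  shows "card C = card (UNIV :: 'a set) ^ k"
proof -
  interpret vector_space "vscale :: 'a \<Rightarrow> ('n \<Rightarrow> 'a) \<Rightarrow> _" by (rule vector_space_vscale)
  show ?thesis using assms card_subspace_eq_power_dim[of C] by (simp add: linear_code_def)
qed

lemma zeta_pow: "zeta p ^ j = cis (2 * pi * real j / real p)"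
  unfolding zeta_def DeMoivre by (simp add: field_simps)

lemma zeta_pow_mod:
  assumes "0 < p"
  shows "zeta p ^ (j mod p) = zeta p ^ j"
proof -
  have "zeta p ^ j = zeta p ^ (p * (j div p) + j mod p)" by simp
  also have "\<dots> = (zeta p ^ p) ^ (j div p) * zeta p ^ (j mod p)"
    by (simp only: power_add power_mult)
  finally show ?thesis using assms by (simp add: zeta_pow)
qed

lemma zeta_pow_neq_1:
  assumes "0 < j" and "j < p"
  shows "zeta p ^ j \<noteq> 1"
proof -
  have "inj_on (\<lambda>j. cis (2 * pi * real j / real p)) {..<p}"
    using bij_betw_roots_unity[of p] assms by (simp add: bij_betw_def)
  then have "zeta p ^ j \<noteq> zeta p ^ 0"
    unfolding zeta_pow using assms inj_onD[of _ "{..<p}" j 0] by fastforce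
  then show ?thesis by simp
qed

lemma sum_eq_0_if_permutation_scales:
  fixes f :: "'a \<Rightarrow> 'b::idom"
  assumes "bij_betw h A A" and "\<And>a. a \<in> A \<Longrightarrow> f (h a) = z * f a" and "z \<noteq> 1"
  shows "sum f A = 0"
proof -
  have "sum f A = (\<Sum>a\<in>A. f (h a))" using sum.reindex_bij_betw[OF assms(1), of f] by simp
  also have "\<dots> = z * sum f A" by (simp add: assms(2) sum_distrib_left)
  finally have "(1 - z) * sum f A = 0" by (simp add: algebra_simps)
  then show ?thesis using assms(3) by simp
qed

definition phi_norm :: "nat \<Rightarrow> nat \<Rightarrow> complex" where
  "phi_norm q k = complex_of_real (real q powr (- (real k / 2)))"

lemma phi_apply:
  assumes "finite C"
  shows "phi p q k C f y = phi_norm q k * (if y \<in> C then zeta p ^ f y else 0)"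
  using assms unfolding phi_def ket_def phi_norm_def
  by (simp add: if_distrib[where f = "\<lambda>x. _ * x"] sum.delta' cong: if_cong)

lemma tensor_replicate:
  "tensor (replicate m v) cs = (if length cs = m then prod_list (map v cs) else 0)"
  unfolding tensor_def prod.list_conv_set_nth by (auto simp: atLeast0LessThan intro!: prod.cong)

definition split_state :: "'v::monoid_add set \<Rightarrow> nat \<Rightarrow> 'v \<Rightarrow> 'v list \<Rightarrow> complex" where
  "split_state C m c = (\<Sum>cs\<in>{cs. length cs = m \<and> set cs \<subseteq> C \<and> sum_list cs = c}. ket cs)"

lemma split_state_apply:
  assumes "finite C"
  shows "split_state C m c cs = (if length cs = m \<and> set cs \<subseteq> C \<and> sum_list cs = c then 1 else 0)"
proof -
  have "finite {cs. length cs = m \<and> set cs \<subseteq> C \<and> sum_list cs = c}"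
    by (rule finite_subset[OF _ finite_lists_length_eq[OF assms, of m]]) auto
  then show ?thesis unfolding split_state_def sum_fun_apply ket_def by (simp add: sum.delta)
qed

locale Fp_dual_code =
  fixes p :: nat
    and C :: "('n::finite \<Rightarrow> 'a::{field,finite}) set"
    and \<kappa> :: "'b::{field,finite} \<Rightarrow> ('n \<Rightarrow> 'a) \<Rightarrow> nat"
  assumes prime: "prime p"
    and iso: "Fp_linear_iso p C \<kappa>"
    and code_subspace: "module.subspace vscale C"
    and card_code: "card C = card (UNIV :: 'b set)"
begin

lemma p_pos: "0 < p"
  using prime by (rule prime_gt_0_nat)

lemma zero_mem: "0 \<in> C"
  and add_mem: "c \<in> C \<Longrightarrow> d \<in> C \<Longrightarrow> c + d \<in> C"
  and diff_mem: "c \<in> C \<Longrightarrow> d \<in> C \<Longrightarrow> c - d \<in> C"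
proof -
  interpret vector_space "vscale :: 'a \<Rightarrow> ('n \<Rightarrow> 'a) \<Rightarrow> _" by (rule vector_space_vscale)
  show "0 \<in> C" using code_subspace by (rule subspace_0)
  show "c \<in> C \<Longrightarrow> d \<in> C \<Longrightarrow> c + d \<in> C" using code_subspace by (rule subspace_add)
  show "c \<in> C \<Longrightarrow> d \<in> C \<Longrightarrow> c - d \<in> C" using code_subspace by (rule subspace_diff)
qed

lemma sum_list_mem: "set cs \<subseteq> C \<Longrightarrow> sum_list cs \<in> C"
  by (induct cs) (auto intro: zero_mem add_mem)

lemma kappa_add: "\<kappa> (x + y) c = (\<kappa> x c + \<kappa> y c) mod p"
  using iso unfolding Fp_linear_iso_def by simp

lemma kappa_zero: "\<kappa> 0 c = 0"
proof -
  have "\<kappa> (of_nat 0 * 0) = (\<lambda>c. (0 * \<kappa> 0 c) mod p)"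
    using iso p_pos unfolding Fp_linear_iso_def by blast
  then show ?thesis by (simp add: fun_eq_iff)
qed

lemma inj_kappa: "inj \<kappa>"
  using iso unfolding Fp_linear_iso_def bij_betw_def by blast

lemma kappa_mem_Fp_dual: "\<kappa> x \<in> Fp_dual p C"
  using iso unfolding Fp_linear_iso_def bij_betw_def by blast

lemma kappa_less: "c \<in> C \<Longrightarrow> \<kappa> x c < p"
  and kappa_outside: "c \<notin> C \<Longrightarrow> \<kappa> x c = 0"
  and kappa_add_code: "c \<in> C \<Longrightarrow> d \<in> C \<Longrightarrow> \<kappa> x (c + d) = (\<kappa> x c + \<kappa> x d) mod p"
  using kappa_mem_Fp_dual[of x] unfolding Fp_dual_def by blast+

lemma kappa_at_zero: "\<kappa> x 0 = 0"
proof -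
  have "\<kappa> x (vscale (of_nat 0) 0) = (0 * \<kappa> x 0) mod p"
    using kappa_mem_Fp_dual[of x] zero_mem p_pos unfolding Fp_dual_def by blast
  then show ?thesis by (simp add: vscale_def func_zero)
qed

definition character :: "'b \<Rightarrow> ('n \<Rightarrow> 'a) \<Rightarrow> complex" where
  "character x c = zeta p ^ \<kappa> x c"

lemma character_nonzero: "character x c \<noteq> 0"
  by (simp add: character_def zeta_def)

lemma character_zero: "character 0 c = 1"
  by (simp add: character_def kappa_zero)

lemma character_at_zero: "character x 0 = 1"
  by (simp add: character_def kappa_at_zero)

lemma character_add: "character (x + y) c = character x c * character y c"
  unfolding character_def kappa_add zeta_pow_mod[OF p_pos] by (simp add: power_add)

lemma character_add_code:
  "c \<in> C \<Longrightarrow> d \<in> C \<Longrightarrow> character x (c + d) = character x c * character x d"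
  unfolding character_def kappa_add_code zeta_pow_mod[OF p_pos] by (simp add: power_add)

lemma character_neq_1: "c \<in> C \<Longrightarrow> \<kappa> x c \<noteq> 0 \<Longrightarrow> character x c \<noteq> 1"
  unfolding character_def using zeta_pow_neq_1 kappa_less by blast

lemma sum_character_code: "(\<Sum>c\<in>C. character x c) = (if x = 0 then of_nat (card C) else 0)"
proof (cases "x = 0")
  case False
  then have "\<kappa> x \<noteq> \<kappa> 0" using inj_kappa by (auto dest: injD)
  then obtain d where "\<kappa> x d \<noteq> 0" using kappa_zero by (auto simp: fun_eq_iff)
  then have "d \<in> C" using kappa_outside by metis
  have "(\<Sum>c\<in>C. character x c) = 0"
  proof (rule sum_eq_0_if_permutation_scales)
    show "bij_betw (\<lambda>c. c + d) C C"
      by (rule bij_betwI[where g = "\<lambda>c. c - d"]) (auto intro: add_mem diff_mem \<open>d \<in> C\<close>)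
    show "character x (c + d) = character x d * character x c" if "c \<in> C" for c
      using character_add_code[OF that \<open>d \<in> C\<close>] by (simp add: mult.commute)
    show "character x d \<noteq> 1" by (rule character_neq_1) fact+
  qed
  with False show ?thesis by simp
qed (simp add: character_zero)

lemma sum_character_dual_eq_0:
  assumes "c \<in> C" and "\<kappa> y c \<noteq> 0"
  shows "(\<Sum>x\<in>UNIV. character x c) = 0"
proof (rule sum_eq_0_if_permutation_scales)
  show "bij_betw (\<lambda>x. x + y) UNIV UNIV" by (rule bij_plus_right)
  show "character (x + y) c = character y c * character x c" for x
    by (simp add: character_add mult.commute)
  show "character y c \<noteq> 1" using assms by (rule character_neq_1)
qed

lemma code_word_eq_0_if_kappa_vanishes:
  assumes "c \<in> C" and "\<And>y. \<kappa> y c = 0"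
  shows "c = 0"
proof -
  define K where "K = {c \<in> C. \<forall>y. \<kappa> y c = 0}"
  have "of_nat (card K * card (UNIV :: 'b set)) = (\<Sum>c\<in>C. \<Sum>x\<in>UNIV. character x c)"
  proof -
    have "(\<Sum>x\<in>UNIV. character x d) = (if d \<in> K then of_nat (card (UNIV :: 'b set)) else 0)"
      if "d \<in> C" for d
      using sum_character_dual_eq_0 that by (auto simp: K_def character_def)
    moreover have "K \<subseteq> C" by (auto simp: K_def)
    ultimately show ?thesis by (simp add: sum.If_cases Int_absorb1 cong: sum.cong)
  qed
  also have "\<dots> = (\<Sum>x\<in>UNIV. \<Sum>c\<in>C. character x c)" by (rule sum.swap)
  also have "\<dots> = of_nat (card C)" by (simp add: sum_character_code)
  finally have "card K = 1" using card_code by simp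
  moreover have "0 \<in> K" "c \<in> K" using zero_mem kappa_at_zero assms by (auto simp: K_def)
  ultimately show "c = 0" by (metis card_1_singletonE singletonD)
qed

lemma sum_character_dual:
  assumes "c \<in> C"
  shows "(\<Sum>x\<in>UNIV. character x c) = (if c = 0 then of_nat (card (UNIV :: 'b set)) else 0)"
  using assms code_word_eq_0_if_kappa_vanishes sum_character_dual_eq_0
  by (auto simp: character_at_zero)

lemma prod_list_phi:
  "prod_list (map (phi p q k C (\<kappa> x)) cs)
     = (if set cs \<subseteq> C then phi_norm q k ^ length cs * character x (sum_list cs) else 0)"
proof (induct cs)
  case (Cons a cs)
  show ?case
  proof (cases "a \<in> C \<and> set cs \<subseteq> C")
    case True
    then have "character x (sum_list (a # cs)) = character x a * character x (sum_list cs)"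
      by (simp add: character_add_code sum_list_mem)
    then show ?thesis using Cons True by (simp add: phi_apply character_def[symmetric])
  next
    case False
    show ?thesis
    proof (cases "a \<in> C")
      case True
      with False have "\<not> set cs \<subseteq> C" by blast
      with True show ?thesis by (simp add: Cons)
    qed (simp add: phi_apply)
  qed
qed (simp add: character_at_zero)

lemma Phi_diag_apply:
  "Phi p q k C \<kappa> (replicate m x) cs
     = (if length cs = m \<and> set cs \<subseteq> C then phi_norm q k ^ m * character x (sum_list cs) else 0)"
  unfolding Phi_def map_replicate tensor_replicate prod_list_phi by auto

lemma sum_scaled_split_states_apply:
  "(\<Sum>c\<in>C. cscale (a c) (split_state C m c)) cs
     = (if length cs = m \<and> set cs \<subseteq> C then a (sum_list cs) else 0)"
proof (cases "length cs = m \<and> set cs \<subseteq> C")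
  case True
  then have "sum_list cs \<in> C" by (simp add: sum_list_mem)
  with True show ?thesis
    by (simp add: sum_fun_apply cscale_def split_state_apply if_distrib[where f = "\<lambda>x. _ * x"]
        sum.delta' cong: if_cong)
next
  case False
  then have "split_state C m c cs = 0" for c by (auto simp: split_state_apply)
  with False show ?thesis by (auto simp: sum_fun_apply cscale_def)
qed

lemma Phi_diag_eq_sum_split_states:
  "Phi p q k C \<kappa> (replicate m x)
     = (\<Sum>c\<in>C. cscale (phi_norm q k ^ m * character x c) (split_state C m c))"
  by (rule ext) (simp add: Phi_diag_apply sum_scaled_split_states_apply)

lemma sum_Phi_diag_eq_split_state:
  assumes "c \<in> C"
  shows "(\<Sum>x\<in>UNIV. cscale (inverse (character x c)) (Phi p q k C \<kappa> (replicate m x)))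
     = cscale (phi_norm q k ^ m * of_nat (card (UNIV :: 'b set))) (split_state C m c)"
    (is "?lhs = ?rhs")
proof
  fix cs
  show "?lhs cs = ?rhs cs"
  proof (cases "length cs = m \<and> set cs \<subseteq> C")
    case True
    then have d: "sum_list cs - c \<in> C" using sum_list_mem diff_mem assms by blast
    have "inverse (character x c) * character x (sum_list cs) = character x (sum_list cs - c)" for x
      using character_add_code[OF d assms, of x] character_nonzero[of x c] by (simp add: field_simps)
    then have "?lhs cs = phi_norm q k ^ m * (\<Sum>x\<in>UNIV. character x (sum_list cs - c))"
      using True by (simp add: sum_fun_apply cscale_def Phi_diag_apply sum_distrib_left mult_ac)
    also have "\<dots> = ?rhs cs"
      using sum_character_dual[OF d] True by (simp add: cscale_def split_state_apply)
    finally show ?thesis .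
  next
    case False
    then have "Phi p q k C \<kappa> (replicate m x) cs = 0" "split_state C m c cs = 0" for x
      by (auto simp: Phi_diag_apply split_state_apply)
    then show ?thesis by (simp add: sum_fun_apply cscale_def)
  qed
qed

lemma span_Phi_diag_eq_span_split_states:
  assumes "0 < q"
  shows "cspan (Phi p q k C \<kappa> ` diag m) = cspan (split_state C m ` C)"
proof -
  interpret M: module "cscale :: complex \<Rightarrow> (('n \<Rightarrow> 'a) list \<Rightarrow> complex) \<Rightarrow> _"
    by (rule module_cscale)
  have "Phi p q k C \<kappa> ` diag m \<subseteq> M.span (split_state C m ` C)"
  proof
    fix v assume "v \<in> Phi p q k C \<kappa> ` diag m"
    then obtain x where v: "v = Phi p q k C \<kappa> (replicate m x)" by (auto simp: diag_def)
    show "v \<in> M.span (split_state C m ` C)"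
      unfolding v Phi_diag_eq_sum_split_states by (intro M.span_sum M.span_scale M.span_base imageI)
  qed
  moreover have "split_state C m ` C \<subseteq> M.span (Phi p q k C \<kappa> ` diag m)"
  proof
    fix v assume "v \<in> split_state C m ` C"
    then obtain c where c: "c \<in> C" and v: "v = split_state C m c" by blast
    define a where "a = phi_norm q k ^ m * of_nat (card (UNIV :: 'b set))"
    have "a \<noteq> 0" using assms by (simp add: a_def phi_norm_def)
    have "cscale a v \<in> M.span (Phi p q k C \<kappa> ` diag m)"
      unfolding v a_def sum_Phi_diag_eq_split_state[OF c, symmetric]
      by (intro M.span_sum M.span_scale M.span_base) (auto simp: diag_def)
    then have "cscale (inverse a) (cscale a v) \<in> M.span (Phi p q k C \<kappa> ` diag m)"
      by (rule M.span_scale)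
    then show "v \<in> M.span (Phi p q k C \<kappa> ` diag m)" using \<open>a \<noteq> 0\<close> by simp
  qed
  ultimately show ?thesis unfolding cspan_def by (intro M.span_eq[THEN iffD2] conjI)
qed

end

theorem proposition3p6:
  fixes p q r k m :: nat
    and C :: "('n::finite \<Rightarrow> 'a::{field,finite}) set"
    and \<kappa> :: "'b::{field,finite} \<Rightarrow> ('n \<Rightarrow> 'a) \<Rightarrow> nat"
  assumes "prime p" and "q = p ^ r" and "card (UNIV :: 'a set) = q"
    and "linear_code C k" and "1 \<le> k" and "k < card (UNIV :: 'n set)"
    and "2 \<le> m"
    and "card (UNIV :: 'b set) = q ^ k"
    and "Fp_linear_iso p C \<kappa>"
  shows "cspan (Phi p q k C \<kappa> ` diag m)
       = cspan ((\<lambda>c. \<Sum>cs\<in>{cs. length cs = m \<and> set cs \<subseteq> C \<and> sum_list cs = c}. ket cs) ` C)"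
proof -
  have "card C = card (UNIV :: 'b set)"
    using card_linear_code[OF assms(4)] assms(3,8) by simp
  then interpret Fp_dual_code p C \<kappa>
    using assms(1,4,9) by unfold_locales (auto simp: linear_code_def)
  have "0 < q" using assms(3) by (metis card_gt_0_iff finite UNIV_not_empty)
  then show ?thesis using span_Phi_diag_eq_span_split_states unfolding split_state_def by simp
qed

end
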